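(* Let $\mathcal{X}=[0,1]^2$ and let $\mathcal{G}$ be the class of monotone allocations. Fix $M<\infty$, $\kappa\in(0,1/2)$, $A>0$, assume unconfoundedness, and let $\mathcal{P}_r$ be the set of distributions under which $X$ has a Lebesgue density on $[0,1]^2$ bounded above by $A$. Let $\hat G_{EWM}\in\arg\max_{G\in\mathcal{G}}W_n(G)$ be the empirical welfare maximization rule over $\mathcal{G}$. Then $$\sup_{P\in\mathcal{P}_r\cap\mathcal{P}(M,\kappa)}E_{P^n}\big[W^*_{\mathcal{G}}-W(\hat G_{EWM})\big]=O\big(n^{-1/4}\big).$$
   Context: Potential outcomes $Y(0),Y(1)\in\mathbb{R}$, treatment $D\in\{0,1\}$, covariate $X=(X_1,X_2)\in[0,1]^2$; observed $Y=Y(1)D+Y(0)(1-D)$; $P$ is the distribution of $(Y,D,X)$, data i.i.d. from $P$. Unconfoundedness: $(Y(1),Y(0))\perp D\mid X$. $e(x)=E_P[D\mid X=x]$ (known). $\mathcal{P}(M,\kappa)$: distributions with support of $Y$ in $[-M/2,M/2]$ and $e(x)\in[\kappa,1-\kappa]$ for all $x$. Welfare $W(G)=E_P[(\frac{YD}{e(X)}-\frac{Y(1-D)}{1-e(X)})\mathbf{1}\{X\in G\}]$, $W^*_{\mathcal{G}}=\sup_{G\in\mathcal{G}}W(G)$. Monotone allocations: $\mathcal{G}=\{\{x\in[0,1]^2:x_2\le f(x_1)\}:f:[0,1]\to[0,1]\text{ non-increasing}\}$. $W_n(G)=\frac1n\sum_i\big(\frac{Y_iD_i}{e(X_i)}-\frac{Y_i(1-D_i)}{1-e(X_i)}\big)\mathbf{1}\{X_i\in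 G\}$. The maximizer is assumed to exist. *)

theory Defs
  imports "HOL-Probability.Probability"
begin

text \<open>An observation is a triple (Y, D, X) with outcome Y, treatment D (True = treated)
  and covariate X = (X1, X2).\<close>
type_synonym obs = "real \<times> bool \<times> (real \<times> real)"

definition obsY :: "obs \<Rightarrow> real" where "obsY z = fst z"
definition obsD :: "obs \<Rightarrow> bool" where "obsD z = fst (snd z)"
definition obsX :: "obs \<Rightarrow> real \<times> real" where "obsX z = snd (snd z)"

definition unit_square :: "(real \<times> real) set" where
  "unit_square = {0..1} \<times> {0..1}"

definition score :: "(real \<times> real \<Rightarrow> real) \<Rightarrow> obs \<Rightarrow> real" where
  "score e z = obsY z * of_bool (obsD z) / e (obsX z)
             - obsY z * (1 - of_bool (obsD z)) / (1 - e (obsX z))"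

definition welfare :: "obs measure \<Rightarrow> (real \<times> real \<Rightarrow> real) \<Rightarrow> (real \<times> real) set \<Rightarrow> real" where
  "welfare P e G = (\<integral>z. score e z * indicator G (obsX z) \<partial>P)"

definition emp_welfare :: "nat \<Rightarrow> (real \<times> real \<Rightarrow> real) \<Rightarrow> (nat \<Rightarrow> obs) \<Rightarrow> (real \<times> real) set \<Rightarrow> real" where
  "emp_welfare n e z G = (1 / real n) * (\<Sum>i<n. score e (z i) * indicator G (obsX (z i)))"

definition monotone_allocs :: "(real \<times> real) set set" where
  "monotone_allocs = {{x \<in> unit_square. snd x \<le> f (fst x)} | f.
      (\<forall>a\<in>{0..1}. f a \<in> {0..1}) \<and> (\<forall>a\<in>{0..1}. \<forall>b\<in>{0..1}. a \<le> b \<longrightarrow> f b \<le> f a)}"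

definition welfare_star :: "obs measure \<Rightarrow> (real \<times> real \<Rightarrow> real) \<Rightarrow> real" where
  "welfare_star P e = Sup (welfare P e ` monotone_allocs)"

text \<open>P is in P(M,kappa) intersected with P_r, with e a version of the propensity
  score E_P[D | X = x].\<close>
definition admissible :: "real \<Rightarrow> real \<Rightarrow> real \<Rightarrow> obs measure \<Rightarrow> (real \<times> real \<Rightarrow> real) \<Rightarrow> bool" where
  "admissible M \<kappa> A P e \<longleftrightarrow>
     prob_space P \<and> sets P = sets borel \<and>
     (AE z in P. \<bar>obsY z\<bar> \<le> M / 2) \<and>
     e \<in> borel_measurable borel \<and>
     (\<forall>x\<in>unit_square. \<kappa> \<le> e x \<and> e x \<le> 1 - \<kappa>) \<and>
     (\<forall>B\<in>sets borel. (\<integral>z. of_bool (obsD z) * indicator B (obsX z) \<partial>P)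
                    = (\<integral>z. e (obsX z) * indicator B (obsX z) \<partial>P)) \<and>
     (\<exists>f. f \<in> borel_measurable lborel \<and> (\<forall>x. 0 \<le> f x \<and> f x \<le> A) \<and>
          (\<forall>x. x \<notin> unit_square \<longrightarrow> f x = 0) \<and>
          distr P lborel obsX = density lborel (\<lambda>x. ennreal (f x)))"

definition is_EWM_rule :: "nat \<Rightarrow> (real \<times> real \<Rightarrow> real) \<Rightarrow> ((nat \<Rightarrow> obs) \<Rightarrow> (real \<times> real) set) \<Rightarrow> bool" where
  "is_EWM_rule n e Ghat \<longleftrightarrow>
     (\<forall>z. Ghat z \<in> monotone_allocs \<and>
          (\<forall>G\<in>monotone_allocs. emp_welfare n e z G \<le> emp_welfare n e z (Ghat z)))"

end

theory Submission
  imports Defs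
begin

text \<open>Cut the unit square into k^2 cells of side 1/k. For each allocation G, the deviation
  W_n(G) - W(G) is the sum of the deviations on the pieces G \<inter> cell. On a cell inside or outside G
  this is the sample-mean deviation of one of 2k^2 fixed statistics, whose expectation is
  O(1/(k sqrt n)) because the cell has probability at most A/k^2; on a cell crossed by the
  boundary of G it exceeds the deviation of the absolute score by at most O(1/k^2). The boundary
  of a monotone allocation is a non-increasing staircase meeting at most 2k cells, so a single
  random bound, independent of G, dominates every deviation and has expectation
  O(k / sqrt n + 1/k). The regret of EWM is at most twice that; k \<approx> n^(1/4) gives n^(-1/4).\<close>

lemma borel_measurable_fst_snd [measurable]:
  "(fst :: real \<times> real \<Rightarrow> real) \<in> borel_measurable borel"
  "(snd :: real \<times> real \<Rightarrow> real) \<in> borel_measurable borel"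
  by (intro borel_measurable_continuous_onI continuous_intros)+

lemma borel_measurable_obsX [measurable]: "obsX \<in> borel_measurable borel"
  unfolding obsX_def by (intro borel_measurable_continuous_onI continuous_intros)

lemma borel_measurable_obsY [measurable]: "obsY \<in> borel_measurable borel"
  unfolding obsY_def by (intro borel_measurable_continuous_onI continuous_intros)

lemma borel_measurable_of_bool_obsD [measurable]:
  "(\<lambda>z. of_bool (obsD z) :: real) \<in> borel_measurable borel"
proof -
  have "continuous_on UNIV ((\<lambda>b::bool. of_bool b :: real) \<circ> (\<lambda>z::obs. fst (snd z)))"
    by (intro continuous_on_compose continuous_intros) (simp add: continuous_on_discrete)
  then show ?thesis
    unfolding obsD_def o_def by (rule borel_measurable_continuous_onI)
qed

lemma borel_measurable_score [measurable]:
  assumes [measurable]: "e \<in> borel_measurable borel"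
  shows "score e \<in> borel_measurable borel"
proof -
  have [measurable]: "(\<lambda>z. e (obsX z)) \<in> borel_measurable borel"
    by measurable
  show ?thesis
    unfolding score_def by measurable
qed

section \<open>Sample means under product measures\<close>

definition mean_deviation :: "'a measure \<Rightarrow> nat \<Rightarrow> ('a \<Rightarrow> real) \<Rightarrow> (nat \<Rightarrow> 'a) \<Rightarrow> real" where
  "mean_deviation P n h z = (1 / real n) * (\<Sum>i<n. h (z i)) - (\<integral>w. h w \<partial>P)"

lemma abs_mean_deviation_le_of_abs_le:
  fixes h h' :: "'a \<Rightarrow> real"
  assumes "integrable P h" "integrable P h'" and "\<And>w. \<bar>h w\<bar> \<le> h' w"
  shows "\<bar>mean_deviation P n h z\<bar> \<le> \<bar>mean_deviation P n h' z\<bar> + 2 * (\<integral>w. h' w \<partial>P)"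
proof -
  have "\<bar>\<Sum>i<n. h (z i)\<bar> \<le> (\<Sum>i<n. h' (z i))"
    using assms(3) by (intro order.trans[OF sum_abs] sum_mono)
  then have "\<bar>(1 / real n) * (\<Sum>i<n. h (z i))\<bar> \<le> (1 / real n) * (\<Sum>i<n. h' (z i))"
    by (simp add: abs_mult divide_right_mono)
  moreover have "\<bar>\<integral>w. h w \<partial>P\<bar> \<le> (\<integral>w. h' w \<partial>P)"
    using assms by (intro order.trans[OF integral_abs_bound] integral_mono) auto
  ultimately show ?thesis
    unfolding mean_deviation_def by linarith
qed

context prob_space
begin

lemma
  fixes h :: "'a \<Rightarrow> real"
  assumes h: "integrable M h" and i: "i \<in> I"
  shows integrable_PiM_component: "integrable (PiM I (\<lambda>_. M)) (\<lambda>z. h (z i))"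
    and integral_PiM_component: "(\<integral>z. h (z i) \<partial>PiM I (\<lambda>_. M)) = (\<integral>w. h w \<partial>M)"
proof -
  have distr: "distr (PiM I (\<lambda>_. M)) M (\<lambda>z. z i) = M"
    using distr_PiM_component[of I "\<lambda>_. M" i] i prob_space_axioms by simp
  have m: "(\<lambda>z. z i) \<in> measurable (PiM I (\<lambda>_. M)) M"
    using i by (rule measurable_component_singleton)
  show "integrable (PiM I (\<lambda>_. M)) (\<lambda>z. h (z i))"
    using integrable_distr_eq[OF m, of h] h distr by simp
  show "(\<integral>z. h (z i) \<partial>PiM I (\<lambda>_. M)) = (\<integral>w. h w \<partial>M)"
    using integral_distr[OF m, of h] h distr by simp
qed

lemma
  fixes g h :: "'a \<Rightarrow> real"
  assumes I: "finite I" "i \<in> I" "j \<in> I" "i \<noteq> j"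
    and g: "integrable M g" and h: "integrable M h"
  shows integrable_PiM_two_components: "integrable (PiM I (\<lambda>_. M)) (\<lambda>z. g (z i) * h (z j))"
    and integral_PiM_two_components:
      "(\<integral>z. g (z i) * h (z j) \<partial>PiM I (\<lambda>_. M)) = (\<integral>w. g w \<partial>M) * (\<integral>w. h w \<partial>M)"
proof -
  interpret product_sigma_finite "\<lambda>_. M" by unfold_locales
  define F where "F m = (if m = i then g else if m = j then h else (\<lambda>_. 1))" for m
  have F: "integrable M (F m)" for m
    unfolding F_def using g h by simp
  have ij: "{i, j} \<subseteq> I" "finite {i, j}" using I by auto
  have "(\<Prod>m\<in>I. F m (z m)) = (\<Prod>m\<in>{i, j}. F m (z m))" for z
    by (rule prod.mono_neutral_right[OF I(1) ij(1)]) (auto simp: F_def)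
  then have prod_eq: "(\<Prod>m\<in>I. F m (z m)) = g (z i) * h (z j)" for z
    using I(4) by (simp add: F_def)
  have "(\<Prod>m\<in>I. integral\<^sup>L M (F m)) = (\<Prod>m\<in>{i, j}. integral\<^sup>L M (F m))"
    by (rule prod.mono_neutral_right[OF I(1) ij(1)]) (auto simp: F_def prob_space)
  then have integral_prod_eq: "(\<Prod>m\<in>I. integral\<^sup>L M (F m)) = (\<integral>w. g w \<partial>M) * (\<integral>w. h w \<partial>M)"
    using I(4) by (simp add: F_def)
  show "integrable (PiM I (\<lambda>_. M)) (\<lambda>z. g (z i) * h (z j))"
    using product_integrable_prod[OF I(1), of F] F by (simp add: prod_eq)
  show "(\<integral>z. g (z i) * h (z j) \<partial>PiM I (\<lambda>_. M)) = (\<integral>w. g w \<partial>M) * (\<integral>w. h w \<partial>M)"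
    using product_integral_prod[OF I(1), of F] F by (simp add: prod_eq integral_prod_eq)
qed

lemma
  fixes g :: "'a \<Rightarrow> real"
  assumes I: "finite I" "i \<in> I" "j \<in> I"
    and g: "integrable M g" "integrable M (\<lambda>w. (g w)^2)" and g_mean: "expectation g = 0"
  shows integrable_PiM_mult_centered_components: "integrable (PiM I (\<lambda>_. M)) (\<lambda>z. g (z i) * g (z j))"
    and integral_PiM_mult_centered_components:
      "(\<integral>z. g (z i) * g (z j) \<partial>PiM I (\<lambda>_. M)) = (if i = j then expectation (\<lambda>w. (g w)^2) else 0)"
proof (atomize (full), cases "i = j")
  case True
  then show "integrable (PiM I (\<lambda>_. M)) (\<lambda>z. g (z i) * g (z j)) \<and>
      (\<integral>z. g (z i) * g (z j) \<partial>PiM I (\<lambda>_. M)) = (if i = j then expectation (\<lambda>w. (g w)^2) else 0)"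
    using integrable_PiM_component[OF g(2) I(2)] integral_PiM_component[OF g(2) I(2)]
    by (simp add: power2_eq_square)
next
  case False
  then show "integrable (PiM I (\<lambda>_. M)) (\<lambda>z. g (z i) * g (z j)) \<and>
      (\<integral>z. g (z i) * g (z j) \<partial>PiM I (\<lambda>_. M)) = (if i = j then expectation (\<lambda>w. (g w)^2) else 0)"
    using integrable_PiM_two_components[OF I False g(1) g(1)]
      integral_PiM_two_components[OF I False g(1) g(1)] g_mean
    by simp
qed

lemma square_integral_abs_le_integral_square:
  fixes Z :: "'a \<Rightarrow> real"
  assumes "integrable M Z" "integrable M (\<lambda>x. (Z x)^2)"
  shows "(\<integral>x. \<bar>Z x\<bar> \<partial>M)^2 \<le> (\<integral>x. (Z x)^2 \<partial>M)"
  using variance_eq[of "\<lambda>x. \<bar>Z x\<bar>"] variance_positive[of "\<lambda>x. \<bar>Z x\<bar>"] assms by simp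

lemma
  fixes h :: "'a \<Rightarrow> real"
  assumes h: "integrable M h" and h2: "integrable M (\<lambda>w. (h w)^2)" and n: "0 < n"
  shows integrable_mean_deviation: "integrable (PiM {..<n} (\<lambda>_. M)) (mean_deviation M n h)"
    and integrable_mean_deviation_square:
      "integrable (PiM {..<n} (\<lambda>_. M)) (\<lambda>z. (mean_deviation M n h z)^2)"
    and integral_mean_deviation_square_le:
      "(\<integral>z. (mean_deviation M n h z)^2 \<partial>PiM {..<n} (\<lambda>_. M)) \<le> (\<integral>w. (h w)^2 \<partial>M) / n"
proof -
  let ?Q = "PiM {..<n} (\<lambda>_. M)"
  define g where "g = (\<lambda>w. h w - expectation h)"
  have g: "integrable M g" "integrable M (\<lambda>w. (g w)^2)"
    using h h2 by (simp_all add: g_def power2_diff)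
  have g_mean: "expectation g = 0"
    using h by (simp add: g_def prob_space)
  have g_square: "expectation (\<lambda>w. (g w)^2) \<le> expectation (\<lambda>w. (h w)^2)"
    using variance_eq[OF h h2] unfolding g_def by simp
  have dev_eq: "mean_deviation M n h z = (1 / real n) * (\<Sum>i<n. g (z i))" for z
    using n by (simp add: mean_deviation_def g_def sum_subtractf field_simps)
  note pair_integrable = integrable_PiM_mult_centered_components[OF finite_lessThan _ _ g g_mean]
  note pair_integral = integral_PiM_mult_centered_components[OF finite_lessThan _ _ g g_mean]
  have square_eq: "(mean_deviation M n h z)^2 = (1 / real n)^2 * (\<Sum>i<n. \<Sum>j<n. g (z i) * g (z j))"
    for z
    unfolding dev_eq by (simp add: power2_eq_square sum_product algebra_simps)
  have sum_integrable: "integrable ?Q (\<lambda>z. \<Sum>j<n. g (z i) * g (z j))" if "i < n" for i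
    using pair_integrable that by (intro Bochner_Integration.integrable_sum) auto
  show "integrable ?Q (mean_deviation M n h)"
    unfolding dev_eq[abs_def]
    by (intro integrable_mult_right Bochner_Integration.integrable_sum integrable_PiM_component[OF g(1)])
      simp
  show "integrable ?Q (\<lambda>z. (mean_deviation M n h z)^2)"
    unfolding square_eq using sum_integrable
    by (intro integrable_mult_right Bochner_Integration.integrable_sum) (use pair_integrable in auto)
  have "(\<integral>z. (mean_deviation M n h z)^2 \<partial>?Q)
      = (1 / real n)^2 * (\<Sum>i<n. \<Sum>j<n. \<integral>z. g (z i) * g (z j) \<partial>?Q)"
    unfolding square_eq using sum_integrable pair_integrable
    by (simp add: Bochner_Integration.integral_sum)
  also have "\<dots> = (1 / real n)^2 * (\<Sum>i<n. \<Sum>j<n. if i = j then expectation (\<lambda>w. (g w)^2) else 0)"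
    using pair_integral by (intro arg_cong[where f = "\<lambda>x. (1 / real n)^2 * x"] sum.cong) simp_all
  also have "\<dots> = (1 / real n)^2 * (real n * expectation (\<lambda>w. (g w)^2))"
    by simp
  also have "\<dots> = expectation (\<lambda>w. (g w)^2) / n"
    using n by (simp add: power2_eq_square)
  also have "\<dots> \<le> (\<integral>w. (h w)^2 \<partial>M) / n"
    using g_square by (simp add: divide_right_mono)
  finally show "(\<integral>z. (mean_deviation M n h z)^2 \<partial>?Q) \<le> (\<integral>w. (h w)^2 \<partial>M) / n" .
qed

lemma integral_abs_mean_deviation_le:
  fixes h :: "'a \<Rightarrow> real"
  assumes h: "integrable M h" and h2: "integrable M (\<lambda>w. (h w)^2)" and n: "0 < n"
  shows "(\<integral>z. \<bar>mean_deviation M n h z\<bar> \<partial>PiM {..<n} (\<lambda>_. M)) \<le> sqrt ((\<integral>w. (h w)^2 \<partial>M) / n)"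
proof -
  interpret Q: prob_space "PiM {..<n} (\<lambda>_. M)"
    by (intro prob_space_PiM) (simp add: prob_space_axioms)
  show ?thesis
    using Q.square_integral_abs_le_integral_square[OF integrable_mean_deviation[OF assms]
        integrable_mean_deviation_square[OF assms]]
      integral_mean_deviation_square_le[OF assms]
    by (intro real_le_rsqrt) simp
qed

end

section \<open>A grid on the unit square\<close>

text \<open>The minimum puts the right edge t = 1 into the last cell.\<close>
definition grid_index :: "nat \<Rightarrow> real \<Rightarrow> nat" where
  "grid_index k t = min (k - 1) (nat \<lfloor>real k * t\<rfloor>)"

definition grid_cell :: "nat \<Rightarrow> nat \<times> nat \<Rightarrow> (real \<times> real) set" where
  "grid_cell k c = {x \<in> unit_square. grid_index k (fst x) = fst c \<and> grid_index k (snd x) = snd c}"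

definition grid_cells :: "nat \<Rightarrow> (nat \<times> nat) set" where
  "grid_cells k = {..<k} \<times> {..<k}"

lemma finite_grid_cells [simp]: "finite (grid_cells k)"
  by (simp add: grid_cells_def)

lemma card_grid_cells: "card (grid_cells k) = k * k"
  by (simp add: grid_cells_def card_cartesian_product)

lemma grid_index_less: "1 \<le> k \<Longrightarrow> grid_index k t < k"
  unfolding grid_index_def by auto

lemma grid_index_bounds:
  assumes k: "1 \<le> k" and t: "0 \<le> t" "t \<le> 1"
  shows "real (grid_index k t) \<le> real k * t" "real k * t \<le> real (grid_index k t) + 1"
proof -
  have kt: "0 \<le> real k * t" "real k * t \<le> real k"
    using t by (auto simp: mult_left_le)
  have floor: "real (nat \<lfloor>real k * t\<rfloor>) = of_int \<lfloor>real k * t\<rfloor>"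
    using kt by simp
  show "real (grid_index k t) \<le> real k * t"
    unfolding grid_index_def using floor of_int_floor_le[of "real k * t"] by linarith
  show "real k * t \<le> real (grid_index k t) + 1"
  proof (cases "nat \<lfloor>real k * t\<rfloor> \<le> k - 1")
    case True
    then show ?thesis
      using floor real_of_int_floor_add_one_ge[of "real k * t"] by (simp add: grid_index_def)
  next
    case False
    then show ?thesis
      using kt k by (simp add: grid_index_def of_nat_diff)
  qed
qed

lemma grid_cell_subset_unit_square: "grid_cell k c \<subseteq> unit_square"
  unfolding grid_cell_def by auto

lemma grid_cell_bounds:
  assumes k: "1 \<le> k" and x: "x \<in> grid_cell k (j, l)"
  shows "real j / k \<le> fst x" "fst x \<le> (real j + 1) / k"
    and "real l / k \<le> snd x" "snd x \<le> (real l + 1) / k"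
proof -
  have k_pos: "0 < real k"
    using k by simp
  from x have unit: "0 \<le> fst x" "fst x \<le> 1" "0 \<le> snd x" "snd x \<le> 1"
    and index: "grid_index k (fst x) = j" "grid_index k (snd x) = l"
    unfolding grid_cell_def unit_square_def by auto
  note bounds = grid_index_bounds[OF k unit(1,2)] grid_index_bounds[OF k unit(3,4)]
  then show "real j / k \<le> fst x" "fst x \<le> (real j + 1) / k"
    and "real l / k \<le> snd x" "snd x \<le> (real l + 1) / k"
    using k_pos unfolding index by (auto simp: field_simps)
qed

lemma grid_cell_subset_cbox:
  "1 \<le> k \<Longrightarrow> grid_cell k (j, l) \<subseteq> cbox (real j / k, real l / k) ((real j + 1) / k, (real l + 1) / k)"
  using grid_cell_bounds by (force simp: cbox_Pair_eq)

lemma emeasure_lborel_grid_box: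
  assumes "1 \<le> k"
  shows "emeasure lborel (cbox (real j / k, real l / k) ((real j + 1) / k, (real l + 1) / k))
    = ennreal (1 / (real k)^2)"
proof -
  have "real j / k \<le> (real j + 1) / k" "real l / k \<le> (real l + 1) / k"
    using assms by (auto simp: divide_right_mono)
  moreover have "(real j + 1) / k - real j / k = 1 / k" "(real l + 1) / k - real l / k = 1 / k"
    by (simp_all add: diff_divide_distrib[symmetric])
  ultimately show ?thesis
    by (simp add: emeasure_lborel_cbox_eq Basis_prod_def inner_prod_def power2_eq_square ennreal_mult)
qed

lemma sets_unit_square [measurable]: "unit_square \<in> sets borel"
  unfolding unit_square_def by (intro borel_closed closed_Times closed_atLeastAtMost)

lemma sets_grid_cell [measurable]: "grid_cell k c \<in> sets borel"
proof -
  have [measurable]: "(\<lambda>t::real. grid_index k t) \<in> borel \<rightarrow>\<^sub>M count_space UNIV"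
    unfolding grid_index_def by measurable
  show ?thesis
    unfolding grid_cell_def by measurable
qed

lemma indicator_eq_sum_grid_cells:
  assumes k: "1 \<le> k" and G: "G \<subseteq> unit_square"
  shows "indicator G x = (\<Sum>c\<in>grid_cells k. indicator (G \<inter> grid_cell k c) x :: real)"
proof (cases "x \<in> unit_square")
  case False
  then show ?thesis
    using G grid_cell_subset_unit_square by (auto simp: indicator_def)
next
  case True
  define c where "c = (grid_index k (fst x), grid_index k (snd x))"
  have "c \<in> grid_cells k"
    unfolding c_def grid_cells_def using grid_index_less[OF k] by auto
  moreover have "indicator (G \<inter> grid_cell k d) x = (if d = c then indicator G x else 0 :: real)" for d
    using True unfolding grid_cell_def c_def by (auto simp: indicator_def)
  ultimately show ?thesis
    by (simp add: sum.delta')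
qed

section \<open>Monotone allocations and the grid\<close>

definition crossing_cells :: "nat \<Rightarrow> (real \<times> real) set \<Rightarrow> (nat \<times> nat) set" where
  "crossing_cells k G = {c \<in> grid_cells k. grid_cell k c \<inter> G \<noteq> {} \<and> \<not> grid_cell k c \<subseteq> G}"

lemma monotone_allocsE:
  assumes "G \<in> monotone_allocs"
  obtains f where "\<forall>a\<in>{0..1}. \<forall>b\<in>{0..1}. a \<le> b \<longrightarrow> f b \<le> f a"
    and "G = {x \<in> unit_square. snd x \<le> f (fst x)}"
  using assms unfolding monotone_allocs_def by blast

lemma monotone_allocs_nonempty: "monotone_allocs \<noteq> {}"
proof -
  have "{x \<in> unit_square. snd x \<le> (\<lambda>_. 0::real) (fst x)} \<in> monotone_allocs"
    unfolding monotone_allocs_def by (intro CollectI exI[of _ "\<lambda>_. 0::real"]) auto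
  then show ?thesis
    by blast
qed

lemma monotone_alloc_subset_unit_square: "G \<in> monotone_allocs \<Longrightarrow> G \<subseteq> unit_square"
  by (auto elim: monotone_allocsE)

lemma sets_monotone_alloc:
  assumes "G \<in> monotone_allocs"
  shows "G \<in> sets borel"
proof -
  obtain f where f: "\<forall>a\<in>{0..1}. \<forall>b\<in>{0..1}. a \<le> b \<longrightarrow> f b \<le> f a"
    and G: "G = {x \<in> unit_square. snd x \<le> f (fst x)}"
    using assms by (rule monotone_allocsE)
  define g where "g t = - f (max 0 (min 1 t))" for t
  have "mono g"
    unfolding mono_def g_def using f by (auto intro!: max.mono min.mono)
  then have [measurable]: "g \<in> borel_measurable borel"
    by (rule borel_measurable_mono)
  have "G = unit_square \<inter> {x. g (fst x) \<le> - snd x}"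
    unfolding G g_def unit_square_def by auto
  also have "\<dots> \<in> sets borel"
    by measurable
  finally show ?thesis .
qed

text \<open>A point above the graph of f in the lower-left cell and a point below it in the
  upper-right cell would contradict that f is non-increasing.\<close>
lemma crossing_cells_antitone:
  assumes k: "1 \<le> k" and G: "G \<in> monotone_allocs"
    and c: "(j, l) \<in> crossing_cells k G" and c': "(j', l') \<in> crossing_cells k G"
    and "j < j'"
  shows "l' \<le> l"
proof (rule ccontr)
  assume "\<not> l' \<le> l"
  obtain f where f: "\<forall>a\<in>{0..1}. \<forall>b\<in>{0..1}. a \<le> b \<longrightarrow> f b \<le> f a"
    and G_eq: "G = {x \<in> unit_square. snd x \<le> f (fst x)}"
    using G by (rule monotone_allocsE)
  from c obtain q where q: "q \<in> grid_cell k (j, l)" "q \<notin> G"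
    unfolding crossing_cells_def by auto
  from c' obtain p where p: "p \<in> grid_cell k (j', l')" "p \<in> G"
    unfolding crossing_cells_def by auto
  have "(real j + 1) / k \<le> real j' / k" "(real l + 1) / k \<le> real l' / k"
    using \<open>j < j'\<close> \<open>\<not> l' \<le> l\<close> by (auto simp: divide_right_mono)
  then have "fst q \<le> fst p" "snd q \<le> snd p"
    using grid_cell_bounds[OF k q(1)] grid_cell_bounds[OF k p(1)] by linarith+
  moreover have "q \<in> unit_square" "p \<in> unit_square"
    using p(1) q(1) grid_cell_subset_unit_square by auto
  ultimately have "f (fst p) \<le> f (fst q)"
    using f unfolding unit_square_def by auto
  then show False
    using p q \<open>snd q \<le> snd p\<close> \<open>q \<in> unit_square\<close> unfolding G_eq by auto
qed

lemma card_crossing_cells: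
  assumes k: "1 \<le> k" and G: "G \<in> monotone_allocs"
  shows "card (crossing_cells k G) \<le> 2 * k"
proof -
  let ?d = "\<lambda>c::nat \<times> nat. int (fst c) - int (snd c)"
  have "inj_on ?d (crossing_cells k G)"
  proof (rule inj_onI, clarify)
    fix j l j' l'
    assume "(j, l) \<in> crossing_cells k G" "(j', l') \<in> crossing_cells k G"
      and "?d (j, l) = ?d (j', l')"
    then show "j = j' \<and> l = l'"
      using crossing_cells_antitone[OF k G] by (cases j j' rule: linorder_cases) force+
  qed
  moreover have "?d ` crossing_cells k G \<subseteq> {- int k <..< int k}"
    unfolding crossing_cells_def grid_cells_def by auto
  ultimately have "card (crossing_cells k G) \<le> card {- int k <..< int k}"
    by (metis card_image card_mono finite_greaterThanLessThan_int)
  then show ?thesis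
    by simp
qed

section \<open>Deviation of the empirical welfare\<close>

definition score_on :: "(real \<times> real \<Rightarrow> real) \<Rightarrow> (real \<times> real) set \<Rightarrow> obs \<Rightarrow> real" where
  "score_on e S w = score e w * indicator S (obsX w)"

definition abs_score_on :: "(real \<times> real \<Rightarrow> real) \<Rightarrow> (real \<times> real) set \<Rightarrow> obs \<Rightarrow> real" where
  "abs_score_on e S w = \<bar>score e w\<bar> * indicator S (obsX w)"

lemma welfare_eq_integral_score_on: "welfare P e G = (\<integral>w. score_on e G w \<partial>P)"
  by (simp add: welfare_def score_on_def)

lemma emp_welfare_eq_mean_score_on:
  "emp_welfare n e z G = (1 / real n) * (\<Sum>i<n. score_on e G (z i))"
  by (simp add: emp_welfare_def score_on_def)

lemma abs_score_on_square: "(abs_score_on e S w)^2 = (score_on e S w)^2"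
  by (simp add: abs_score_on_def score_on_def power_mult_distrib)

lemma abs_score_on_Int_le: "\<bar>score_on e (G \<inter> S) w\<bar> \<le> abs_score_on e S w"
  by (simp add: score_on_def abs_score_on_def abs_mult indicator_def)

lemma score_on_eq_sum_grid_cells:
  "1 \<le> k \<Longrightarrow> G \<subseteq> unit_square \<Longrightarrow> score_on e G w = (\<Sum>c\<in>grid_cells k. score_on e (G \<inter> grid_cell k c) w)"
  unfolding score_on_def by (simp add: indicator_eq_sum_grid_cells[of k G] sum_distrib_left)

lemma Sup_minus_le_of_empirical_maximizer:
  fixes W Wn :: "'a \<Rightarrow> real"
  assumes "\<G> \<noteq> {}" and "G\<^sub>0 \<in> \<G>" and "\<forall>G\<in>\<G>. Wn G \<le> Wn G\<^sub>0"
    and "\<forall>G\<in>\<G>. \<bar>Wn G - W G\<bar> \<le> R"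
  shows "Sup (W ` \<G>) - W G\<^sub>0 \<le> 2 * R"
proof -
  have "W G \<le> W G\<^sub>0 + 2 * R" if "G \<in> \<G>" for G
    using assms that by (smt (verit, best))
  then have "Sup (W ` \<G>) \<le> W G\<^sub>0 + 2 * R"
    using assms(1) by (intro cSup_least) auto
  then show ?thesis
    by simp
qed

locale admissible_model =
  fixes M \<kappa> A :: real and P :: "obs measure" and e :: "real \<times> real \<Rightarrow> real"
  assumes admissible: "admissible M \<kappa> A P e"
    and M_pos: "0 < M" and \<kappa>_pos: "0 < \<kappa>" and A_pos: "0 < A"
begin

definition B :: real where "B = M / (2 * \<kappa>)"

lemma B_pos: "0 < B"
  using M_pos \<kappa>_pos by (simp add: B_def)

sublocale prob_space P
  using admissible unfolding admissible_def by simp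

lemma sets_P: "sets P = sets borel"
  using admissible unfolding admissible_def by simp

lemma borel_measurable_propensity [measurable]: "e \<in> borel_measurable borel"
  using admissible unfolding admissible_def by simp

lemma borel_measurable_P: "f \<in> borel_measurable borel \<Longrightarrow> f \<in> borel_measurable P"
  using measurable_cong_sets[OF sets_P refl] by auto

lemma AE_abs_score_le: "AE w in P. obsX w \<in> unit_square \<longrightarrow> \<bar>score e w\<bar> \<le> B"
proof -
  have overlap: "\<forall>x\<in>unit_square. \<kappa> \<le> e x \<and> e x \<le> 1 - \<kappa>"
    using admissible unfolding admissible_def by simp
  have "AE w in P. \<bar>obsY w\<bar> \<le> M / 2"
    using admissible unfolding admissible_def by simp
  then show ?thesis
  proof (rule AE_mp, intro AE_I2 impI)
    fix w
    assume Y: "\<bar>obsY w\<bar> \<le> M / 2" and X: "obsX w \<in> unit_square"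
    have "\<kappa> \<le> e (obsX w)" "\<kappa> \<le> 1 - e (obsX w)"
      using overlap X by auto
    then have "\<bar>obsY w\<bar> / e (obsX w) \<le> (M / 2) / \<kappa>" "\<bar>obsY w\<bar> / (1 - e (obsX w)) \<le> (M / 2) / \<kappa>"
      using Y \<kappa>_pos by (intro frac_le; simp)+
    moreover have "0 < e (obsX w)" "0 < 1 - e (obsX w)"
      using \<open>\<kappa> \<le> e (obsX w)\<close> \<open>\<kappa> \<le> 1 - e (obsX w)\<close> \<kappa>_pos by linarith+
    ultimately show "\<bar>score e w\<bar> \<le> B"
      by (cases "obsD w") (simp_all add: score_def abs_divide B_def)
  qed
qed

lemma AE_abs_score_on_le:
  assumes "S \<subseteq> unit_square"
  shows "AE w in P. abs_score_on e S w \<le> B * indicator S (obsX w)"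
  using AE_abs_score_le by eventually_elim (use assms in \<open>auto simp: abs_score_on_def indicator_def\<close>)

lemma
  assumes S: "S \<in> sets borel" "S \<subseteq> unit_square"
  shows integrable_score_on: "integrable P (score_on e S)"
    and integrable_abs_score_on: "integrable P (abs_score_on e S)"
    and integrable_abs_score_on_square: "integrable P (\<lambda>w. (abs_score_on e S w)^2)"
proof -
  have [measurable]: "(\<lambda>w. indicator S (obsX w) :: real) \<in> borel_measurable borel"
    using S(1) by measurable
  have bounded: "AE w in P. \<bar>score_on e S w\<bar> \<le> B \<and> \<bar>abs_score_on e S w\<bar> \<le> B"
    using AE_abs_score_on_le[OF S(2)]
    by eventually_elim (use B_pos in \<open>auto simp: score_on_def abs_score_on_def abs_mult indicator_def\<close>)
  then have bounded_square: "AE w in P. \<bar>(abs_score_on e S w)^2\<bar> \<le> B^2"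
    by eventually_elim (use B_pos in \<open>auto simp: power2_le_iff_abs_le\<close>)
  have [measurable]: "score_on e S \<in> borel_measurable P" "abs_score_on e S \<in> borel_measurable P"
    unfolding score_on_def[abs_def] abs_score_on_def[abs_def]
    by (intro borel_measurable_P; measurable)+
  show "integrable P (score_on e S)" "integrable P (abs_score_on e S)"
    using bounded by (auto intro: integrable_const_bound[where B = B])
  show "integrable P (\<lambda>w. (abs_score_on e S w)^2)"
    using bounded_square by (intro integrable_const_bound[where B = "B^2"]) auto
qed

lemma prob_grid_cell_le:
  assumes k: "1 \<le> k"
  shows "(\<integral>w. indicator (grid_cell k c) (obsX w) \<partial>P) \<le> A / (real k)^2"
proof -
  obtain f where f [measurable]: "f \<in> borel_measurable lborel" and f_le: "\<And>x. f x \<le> A"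
    and distr_X: "distr P lborel obsX = density lborel (\<lambda>x. ennreal (f x))"
    using admissible unfolding admissible_def by blast
  obtain j l where c: "c = (j, l)"
    by (cases c)
  define C where "C = cbox (real j / k, real l / k) ((real j + 1) / k, (real l + 1) / k)"
  have cell_C: "grid_cell k c \<subseteq> C"
    unfolding C_def c using grid_cell_subset_cbox[OF k] .
  have X: "obsX \<in> measurable P lborel"
    by (subst measurable_cong_sets[OF sets_P sets_lborel]) (rule borel_measurable_obsX)
  have "(\<integral>w. indicator (grid_cell k c) (obsX w) \<partial>P)
      = measure (distr P lborel obsX) (grid_cell k c)"
    using integral_distr[OF X, of "indicator (grid_cell k c) :: _ \<Rightarrow> real"] by simp
  also have "\<dots> = measure (density lborel (\<lambda>x. ennreal (f x))) (grid_cell k c)"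
    unfolding distr_X ..
  also have "\<dots> \<le> A / (real k)^2"
    unfolding measure_def
  proof (rule enn2real_leI)
    have "emeasure (density lborel (\<lambda>x. ennreal (f x))) (grid_cell k c)
        = (\<integral>\<^sup>+x. ennreal (f x) * indicator (grid_cell k c) x \<partial>lborel)"
      by (simp add: emeasure_density)
    also have "\<dots> \<le> (\<integral>\<^sup>+x. ennreal A * indicator C x \<partial>lborel)"
      using cell_C f_le by (intro nn_integral_mono) (auto simp: indicator_def ennreal_leI)
    also have "\<dots> = ennreal A * emeasure lborel C"
      by (simp add: nn_integral_cmult_indicator C_def)
    also have "\<dots> = ennreal (A / (real k)^2)"
      using A_pos k by (simp add: C_def emeasure_lborel_grid_box ennreal_mult[symmetric])
    finally show "emeasure (density lborel (\<lambda>x. ennreal (f x))) (grid_cell k c) \<le> ennreal (A / (real k)^2)" .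
  qed (use A_pos in simp)
  finally show ?thesis .
qed

lemma
  assumes k: "1 \<le> k"
  shows integral_abs_score_on_grid_cell_le:
      "(\<integral>w. abs_score_on e (grid_cell k c) w \<partial>P) \<le> B * A / (real k)^2"
    and integral_abs_score_on_grid_cell_square_le:
      "(\<integral>w. (abs_score_on e (grid_cell k c) w)^2 \<partial>P) \<le> B^2 * A / (real k)^2"
proof -
  let ?S = "grid_cell k c" and ?I = "\<lambda>w. indicator (grid_cell k c) (obsX w) :: real"
  have integrable_I: "integrable P ?I"
    by (intro integrable_const_bound[where B = 1] borel_measurable_P) auto
  have bound: "AE w in P. abs_score_on e ?S w \<le> B * ?I w"
    by (rule AE_abs_score_on_le[OF grid_cell_subset_unit_square])
  then have bound_square: "AE w in P. (abs_score_on e ?S w)^2 \<le> B^2 * ?I w"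
    by eventually_elim (auto simp: abs_score_on_def indicator_def power2_le_iff_abs_le)
  have "(\<integral>w. abs_score_on e ?S w \<partial>P) \<le> (\<integral>w. B * ?I w \<partial>P)"
    using bound integrable_I integrable_abs_score_on[OF sets_grid_cell grid_cell_subset_unit_square]
    by (intro integral_mono_AE) auto
  also have "\<dots> = B * (\<integral>w. ?I w \<partial>P)"
    by simp
  also have "\<dots> \<le> B * (A / (real k)^2)"
    using B_pos by (intro mult_left_mono prob_grid_cell_le[OF k]) simp
  finally show "(\<integral>w. abs_score_on e ?S w \<partial>P) \<le> B * A / (real k)^2"
    by simp
  have "(\<integral>w. (abs_score_on e ?S w)^2 \<partial>P) \<le> (\<integral>w. B^2 * ?I w \<partial>P)"
    using bound_square integrable_I
      integrable_abs_score_on_square[OF sets_grid_cell grid_cell_subset_unit_square]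
    by (intro integral_mono_AE) auto
  also have "\<dots> = B^2 * (\<integral>w. ?I w \<partial>P)"
    by simp
  also have "\<dots> \<le> B^2 * (A / (real k)^2)"
    by (intro mult_left_mono prob_grid_cell_le[OF k]) simp
  finally show "(\<integral>w. (abs_score_on e ?S w)^2 \<partial>P) \<le> B^2 * A / (real k)^2"
    by simp
qed

lemma emp_welfare_minus_welfare_eq_sum_grid_cells:
  assumes k: "1 \<le> k" and G: "G \<in> sets borel" "G \<subseteq> unit_square"
  shows "emp_welfare n e z G - welfare P e G
    = (\<Sum>c\<in>grid_cells k. mean_deviation P n (score_on e (G \<inter> grid_cell k c)) z)"
proof -
  have "integrable P (score_on e (G \<inter> grid_cell k c))" for c
    using G by (intro integrable_score_on) auto
  then have "welfare P e G = (\<Sum>c\<in>grid_cells k. \<integral>w. score_on e (G \<inter> grid_cell k c) w \<partial>P)"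
    unfolding welfare_eq_integral_score_on score_on_eq_sum_grid_cells[OF k G(2)]
    by (simp add: Bochner_Integration.integral_sum)
  moreover have "emp_welfare n e z G
      = (\<Sum>c\<in>grid_cells k. (1 / real n) * (\<Sum>i<n. score_on e (G \<inter> grid_cell k c) (z i)))"
    unfolding emp_welfare_eq_mean_score_on score_on_eq_sum_grid_cells[OF k G(2)]
    by (simp add: sum_distrib_left sum.swap[of _ "{..<n}"])
  ultimately show ?thesis
    by (simp add: mean_deviation_def sum_subtractf)
qed

lemma abs_mean_deviation_grid_cell_le:
  assumes k: "1 \<le> k" and G: "G \<in> sets borel" "G \<subseteq> unit_square" and c: "c \<in> grid_cells k"
  shows "\<bar>mean_deviation P n (score_on e (G \<inter> grid_cell k c)) z\<bar>
    \<le> \<bar>mean_deviation P n (score_on e (grid_cell k c)) z\<bar>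
      + \<bar>mean_deviation P n (abs_score_on e (grid_cell k c)) z\<bar>
      + (if c \<in> crossing_cells k G then 2 * B * A / (real k)^2 else 0)"
proof -
  have nonneg: "0 \<le> 2 * B * A / (real k)^2"
    using B_pos A_pos by simp
  consider "grid_cell k c \<subseteq> G" | "G \<inter> grid_cell k c = {}" | "c \<in> crossing_cells k G"
    using c unfolding crossing_cells_def by blast
  then show ?thesis
  proof cases
    case 1
    then have "G \<inter> grid_cell k c = grid_cell k c"
      by blast
    then show ?thesis
      using nonneg by simp
  next
    case 2
    then show ?thesis
      using nonneg by (simp add: mean_deviation_def score_on_def)
  next
    case 3
    have "\<bar>mean_deviation P n (score_on e (G \<inter> grid_cell k c)) z\<bar>
        \<le> \<bar>mean_deviation P n (abs_score_on e (grid_cell k c)) z\<bar>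
          + 2 * (\<integral>w. abs_score_on e (grid_cell k c) w \<partial>P)"
      using G by (intro abs_mean_deviation_le_of_abs_le abs_score_on_Int_le integrable_score_on
          integrable_abs_score_on sets_grid_cell grid_cell_subset_unit_square) auto
    moreover have "2 * (\<integral>w. abs_score_on e (grid_cell k c) w \<partial>P) \<le> 2 * B * A / (real k)^2"
      using integral_abs_score_on_grid_cell_le[OF k, of c] by simp
    ultimately show ?thesis
      using 3 by simp
  qed
qed

definition grid_deviation_bound :: "nat \<Rightarrow> nat \<Rightarrow> (nat \<Rightarrow> obs) \<Rightarrow> real" where
  "grid_deviation_bound n k z =
     (\<Sum>c\<in>grid_cells k. \<bar>mean_deviation P n (score_on e (grid_cell k c)) z\<bar>
       + \<bar>mean_deviation P n (abs_score_on e (grid_cell k c)) z\<bar>) + 4 * B * A / real k"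

lemma abs_emp_welfare_minus_welfare_le:
  assumes k: "1 \<le> k" and G: "G \<in> monotone_allocs"
  shows "\<bar>emp_welfare n e z G - welfare P e G\<bar> \<le> grid_deviation_bound n k z"
proof -
  let ?D = "\<lambda>c. \<bar>mean_deviation P n (score_on e (grid_cell k c)) z\<bar>
    + \<bar>mean_deviation P n (abs_score_on e (grid_cell k c)) z\<bar>"
  define K where "K = 2 * B * A / (real k)^2"
  have K_nonneg: "0 \<le> K"
    unfolding K_def using B_pos A_pos by simp
  have G': "G \<in> sets borel" "G \<subseteq> unit_square"
    using G by (simp_all add: sets_monotone_alloc monotone_alloc_subset_unit_square)
  have "\<bar>emp_welfare n e z G - welfare P e G\<bar>
      \<le> (\<Sum>c\<in>grid_cells k. \<bar>mean_deviation P n (score_on e (G \<inter> grid_cell k c)) z\<bar>)"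
    unfolding emp_welfare_minus_welfare_eq_sum_grid_cells[OF k G'] by (rule sum_abs)
  also have "\<dots> \<le> (\<Sum>c\<in>grid_cells k. ?D c + (if c \<in> crossing_cells k G then K else 0))"
    unfolding K_def by (intro sum_mono abs_mean_deviation_grid_cell_le[OF k G'])
  also have "\<dots> = (\<Sum>c\<in>grid_cells k. ?D c) + real (card (crossing_cells k G)) * K"
  proof -
    have "grid_cells k \<inter> crossing_cells k G = crossing_cells k G"
      unfolding crossing_cells_def by blast
    then show ?thesis
      by (simp add: sum.distrib sum.If_cases)
  qed
  also have "real (card (crossing_cells k G)) * K \<le> real (2 * k) * K"
    using card_crossing_cells[OF k G] K_nonneg by (intro mult_right_mono) auto
  also have "real (2 * k) * K = 4 * B * A / real k"
    unfolding K_def by (simp add: power2_eq_square)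
  finally show ?thesis
    unfolding grid_deviation_bound_def by simp
qed

lemma
  assumes k: "1 \<le> k" and n: "0 < n"
  shows integrable_abs_mean_deviation_grid_cell:
      "integrable (PiM {..<n} (\<lambda>_. P)) (\<lambda>z. \<bar>mean_deviation P n (score_on e (grid_cell k c)) z\<bar>)"
      "integrable (PiM {..<n} (\<lambda>_. P)) (\<lambda>z. \<bar>mean_deviation P n (abs_score_on e (grid_cell k c)) z\<bar>)"
    and integral_abs_mean_deviation_grid_cell_le:
      "(\<integral>z. \<bar>mean_deviation P n (score_on e (grid_cell k c)) z\<bar> \<partial>PiM {..<n} (\<lambda>_. P))
        \<le> B * sqrt A / (real k * sqrt (real n))"
      "(\<integral>z. \<bar>mean_deviation P n (abs_score_on e (grid_cell k c)) z\<bar> \<partial>PiM {..<n} (\<lambda>_. P))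
        \<le> B * sqrt A / (real k * sqrt (real n))"
proof -
  have bound: "sqrt (B^2 * A / (real k)^2 / real n) = B * sqrt A / (real k * sqrt (real n))"
    using B_pos by (simp add: real_sqrt_divide real_sqrt_mult)
  have dev: "sqrt ((\<integral>w. (h w)^2 \<partial>P) / real n) \<le> B * sqrt A / (real k * sqrt (real n))"
    if "(\<integral>w. (h w)^2 \<partial>P) \<le> B^2 * A / (real k)^2" for h
    unfolding bound[symmetric] using that by (intro real_sqrt_le_mono divide_right_mono) auto
  note cell = sets_grid_cell[of k c] grid_cell_subset_unit_square[of k c]
  note square_le = integral_abs_score_on_grid_cell_square_le[OF k, of c]
  have score: "integrable P (score_on e (grid_cell k c))"
      "integrable P (\<lambda>w. (score_on e (grid_cell k c) w)^2)"
    using integrable_score_on[OF cell] integrable_abs_score_on_square[OF cell]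
    by (simp_all add: abs_score_on_square)
  have abs_score: "integrable P (abs_score_on e (grid_cell k c))"
      "integrable P (\<lambda>w. (abs_score_on e (grid_cell k c) w)^2)"
    using integrable_abs_score_on[OF cell] integrable_abs_score_on_square[OF cell] by simp_all
  show "integrable (PiM {..<n} (\<lambda>_. P)) (\<lambda>z. \<bar>mean_deviation P n (score_on e (grid_cell k c)) z\<bar>)"
    "integrable (PiM {..<n} (\<lambda>_. P)) (\<lambda>z. \<bar>mean_deviation P n (abs_score_on e (grid_cell k c)) z\<bar>)"
    using integrable_mean_deviation[OF score n] integrable_mean_deviation[OF abs_score n] by simp_all
  show "(\<integral>z. \<bar>mean_deviation P n (score_on e (grid_cell k c)) z\<bar> \<partial>PiM {..<n} (\<lambda>_. P))
      \<le> B * sqrt A / (real k * sqrt (real n))"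
    using integral_abs_mean_deviation_le[OF score n] dev[of "score_on e (grid_cell k c)"] square_le
    by (simp add: abs_score_on_square)
  show "(\<integral>z. \<bar>mean_deviation P n (abs_score_on e (grid_cell k c)) z\<bar> \<partial>PiM {..<n} (\<lambda>_. P))
      \<le> B * sqrt A / (real k * sqrt (real n))"
    using integral_abs_mean_deviation_le[OF abs_score n] dev square_le by (meson order.trans)
qed

lemma
  assumes k: "1 \<le> k" and n: "0 < n"
  shows integrable_grid_deviation_bound:
      "integrable (PiM {..<n} (\<lambda>_. P)) (grid_deviation_bound n k)"
    and integral_grid_deviation_bound_le:
      "(\<integral>z. grid_deviation_bound n k z \<partial>PiM {..<n} (\<lambda>_. P))
        \<le> 2 * (real k * (B * sqrt A) / sqrt (real n) + 2 * B * A / real k)"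
proof -
  let ?Q = "PiM {..<n} (\<lambda>_. P)"
  interpret Q: prob_space ?Q
    by (intro prob_space_PiM) (simp add: prob_space_axioms)
  define \<epsilon> where "\<epsilon> = B * sqrt A / (real k * sqrt (real n))"
  note integrable = integrable_abs_mean_deviation_grid_cell[OF k n]
  note integral_le = integral_abs_mean_deviation_grid_cell_le[OF k n, folded \<epsilon>_def]
  have sum_integrable: "integrable ?Q (\<lambda>z. \<Sum>c\<in>grid_cells k.
      \<bar>mean_deviation P n (score_on e (grid_cell k c)) z\<bar>
      + \<bar>mean_deviation P n (abs_score_on e (grid_cell k c)) z\<bar>)"
    using integrable by (intro Bochner_Integration.integrable_sum Bochner_Integration.integrable_add)
  then show "integrable ?Q (grid_deviation_bound n k)"
    unfolding grid_deviation_bound_def[abs_def] by simp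
  have "(\<integral>z. grid_deviation_bound n k z \<partial>?Q)
      = (\<Sum>c\<in>grid_cells k. (\<integral>z. \<bar>mean_deviation P n (score_on e (grid_cell k c)) z\<bar> \<partial>?Q)
          + (\<integral>z. \<bar>mean_deviation P n (abs_score_on e (grid_cell k c)) z\<bar> \<partial>?Q))
        + 4 * B * A / real k"
    using sum_integrable integrable
    by (simp add: grid_deviation_bound_def Q.prob_space Bochner_Integration.integral_sum)
  also have "\<dots> \<le> (\<Sum>c\<in>grid_cells k. \<epsilon> + \<epsilon>) + 4 * B * A / real k"
    using integral_le by (intro add_right_mono sum_mono add_mono)
  also have "\<dots> = 2 * (real k * (B * sqrt A) / sqrt (real n) + 2 * B * A / real k)"
    using k by (simp add: card_grid_cells \<epsilon>_def field_simps)
  finally show "(\<integral>z. grid_deviation_bound n k z \<partial>?Q)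
      \<le> 2 * (real k * (B * sqrt A) / sqrt (real n) + 2 * B * A / real k)" .
qed

lemma abs_welfare_le:
  assumes "G \<in> sets borel" "G \<subseteq> unit_square"
  shows "\<bar>welfare P e G\<bar> \<le> B"
proof -
  have "AE w in P. \<bar>score_on e G w\<bar> \<le> B"
    using AE_abs_score_on_le[OF assms(2)]
    by eventually_elim (use B_pos in \<open>auto simp: score_on_def abs_score_on_def abs_mult indicator_def\<close>)
  have "\<bar>welfare P e G\<bar> \<le> (\<integral>w. \<bar>score_on e G w\<bar> \<partial>P)"
    unfolding welfare_eq_integral_score_on by (rule integral_abs_bound)
  also have "\<dots> \<le> (\<integral>w. B \<partial>P)"
    using \<open>AE w in P. \<bar>score_on e G w\<bar> \<le> B\<close> integrable_score_on[OF assms]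
    by (intro integral_mono_AE) auto
  finally show ?thesis
    by (simp add: prob_space)
qed

lemma abs_welfare_star_le: "\<bar>welfare_star P e\<bar> \<le> B"
proof -
  have bounds: "\<bar>x\<bar> \<le> B" if "x \<in> welfare P e ` monotone_allocs" for x
    using that abs_welfare_le sets_monotone_alloc monotone_alloc_subset_unit_square by auto
  have nonempty: "welfare P e ` monotone_allocs \<noteq> {}"
    using monotone_allocs_nonempty by simp
  then obtain x where x: "x \<in> welfare P e ` monotone_allocs"
    by blast
  have "x \<le> welfare_star P e"
    unfolding welfare_star_def using bounds x by (intro cSup_upper bdd_aboveI[of _ B]) (auto simp: abs_le_iff)
  moreover have "welfare_star P e \<le> B"
    unfolding welfare_star_def using bounds nonempty by (intro cSup_least) (auto simp: abs_le_iff)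
  ultimately show ?thesis
    using bounds[OF x] by (simp add: abs_le_iff)
qed

lemma expected_regret_le:
  assumes k: "1 \<le> k" and n: "0 < n" and rule: "is_EWM_rule n e Ghat"
    and measurable: "(\<lambda>z. welfare P e (Ghat z)) \<in> borel_measurable (PiM {..<n} (\<lambda>_. P))"
  shows "(\<integral>z. (welfare_star P e - welfare P e (Ghat z)) \<partial>PiM {..<n} (\<lambda>_. P))
    \<le> 4 * (real k * (B * sqrt A) / sqrt (real n) + 2 * B * A / real k)"
proof -
  let ?Q = "PiM {..<n} (\<lambda>_. P)"
  interpret Q: prob_space ?Q
    by (intro prob_space_PiM) (simp add: prob_space_axioms)
  have Ghat: "Ghat z \<in> monotone_allocs"
    and maximizer: "\<forall>G\<in>monotone_allocs. emp_welfare n e z G \<le> emp_welfare n e z (Ghat z)" for z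
    using rule unfolding is_EWM_rule_def by auto
  have regret: "welfare_star P e - welfare P e (Ghat z) \<le> 2 * grid_deviation_bound n k z" for z
    unfolding welfare_star_def
    by (rule Sup_minus_le_of_empirical_maximizer[where Wn = "\<lambda>G. emp_welfare n e z G"])
      (use monotone_allocs_nonempty Ghat maximizer abs_emp_welfare_minus_welfare_le[OF k] in auto)
  have "\<bar>welfare_star P e - welfare P e (Ghat z)\<bar> \<le> 2 * B" for z
    using abs_welfare_star_le abs_welfare_le[OF sets_monotone_alloc monotone_alloc_subset_unit_square,
        OF Ghat[of z] Ghat[of z]] by linarith
  then have "integrable ?Q (\<lambda>z. welfare_star P e - welfare P e (Ghat z))"
    using measurable by (intro Q.integrable_const_bound[where B = "2 * B"]) auto
  then have "(\<integral>z. (welfare_star P e - welfare P e (Ghat z)) \<partial>?Q) \<le> (\<integral>z. 2 * grid_deviation_bound n k z \<partial>?Q)"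
    using integrable_grid_deviation_bound[OF k n] regret by (intro integral_mono) auto
  also have "\<dots> \<le> 4 * (real k * (B * sqrt A) / sqrt (real n) + 2 * B * A / real k)"
    using integral_grid_deviation_bound_le[OF k n] by simp
  finally show ?thesis .
qed

end

lemma grid_size_rate:
  fixes a b :: real
  assumes n: "1 \<le> n" and a: "0 \<le> a" and b: "0 \<le> b"
  shows "\<exists>k\<ge>1. real k * a / sqrt (real n) + b / real k \<le> (a + 2 * b) * real n powr (-1/4)"
proof -
  define t where "t = real n powr (1/4)"
  define k where "k = nat \<lfloor>t\<rfloor>"
  have t: "1 \<le> t"
    unfolding t_def using n by (simp add: ge_one_powr_ge_zero)
  have kt: "real k \<le> t" "t < real k + 1"
    unfolding k_def using t by (simp_all add: of_nat_nat)
  have k: "1 \<le> k"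
    unfolding k_def using t by (simp add: le_nat_floor)
  have sqrt_n: "sqrt (real n) = t^2"
    unfolding t_def using n by (simp add: powr_powr powr_realpow[symmetric] powr_half_sqrt)
  have rate: "real n powr (-1/4) = 1 / t"
    unfolding t_def using n by (simp add: powr_minus_divide)
  have "t \<le> 2 * real k"
    using kt k by linarith
  then have "1 / real k \<le> 2 / t"
    using k t by (simp add: divide_simps)
  moreover have "real k / t^2 \<le> 1 / t"
    using kt t by (simp add: power2_eq_square divide_simps)
  ultimately have "a * (real k / t^2) + b * (1 / real k) \<le> a * (1 / t) + b * (2 / t)"
    using a b by (intro add_mono mult_left_mono) auto
  then have "real k * a / sqrt (real n) + b / real k \<le> (a + 2 * b) * real n powr (-1/4)"
    unfolding sqrt_n rate by (simp add: algebra_simps add_divide_distrib)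
  with k show ?thesis
    by blast
qed

theorem proposition5p2:
  fixes M \<kappa> A :: real
  assumes "0 < M" and "0 < \<kappa>" and "\<kappa> < 1/2" and "0 < A"
  shows "\<exists>C. \<forall>\<^sub>F n in sequentially.
           \<forall>P e Ghat. admissible M \<kappa> A P e \<longrightarrow> is_EWM_rule n e Ghat \<longrightarrow>
             (\<lambda>z. welfare P e (Ghat z)) \<in> borel_measurable (PiM {..<n} (\<lambda>_. P)) \<longrightarrow>
             (\<integral>z. (welfare_star P e - welfare P e (Ghat z)) \<partial>(PiM {..<n} (\<lambda>_. P)))
               \<le> C * real n powr (-1/4)"
proof (intro exI[of _ "4 * (admissible_model.B M \<kappa> * sqrt A + 4 * admissible_model.B M \<kappa> * A)"]
    eventually_sequentiallyI[of 1] allI impI)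
  fix n :: nat and P e Ghat
  assume n: "1 \<le> n" and admissible: "admissible M \<kappa> A P e" and rule: "is_EWM_rule n e Ghat"
    and measurable: "(\<lambda>z. welfare P e (Ghat z)) \<in> borel_measurable (PiM {..<n} (\<lambda>_. P))"
  \<comment> \<open>The hypothesis \<open>\<kappa> < 1/2\<close> only makes the model nonempty.\<close>
  interpret admissible_model M \<kappa> A P e
    using admissible assms by unfold_locales
  obtain k where k: "1 \<le> k"
    and rate: "real k * (B * sqrt A) / sqrt (real n) + 2 * B * A / real k
      \<le> (B * sqrt A + 2 * (2 * B * A)) * real n powr (-1/4)"
    using grid_size_rate[OF n, of "B * sqrt A" "2 * B * A"] B_pos A_pos by auto
  have "(\<integral>z. (welfare_star P e - welfare P e (Ghat z)) \<partial>PiM {..<n} (\<lambda>_. P))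
      \<le> 4 * (real k * (B * sqrt A) / sqrt (real n) + 2 * B * A / real k)"
    using expected_regret_le[OF k _ rule measurable] n by simp
  also have "\<dots> \<le> 4 * ((B * sqrt A + 2 * (2 * B * A)) * real n powr (-1/4))"
    using rate by (intro mult_left_mono) simp_all
  also have "\<dots> = 4 * (B * sqrt A + 4 * B * A) * real n powr (-1/4)"
    by simp
  finally show "(\<integral>z. (welfare_star P e - welfare P e (Ghat z)) \<partial>PiM {..<n} (\<lambda>_. P))
      \<le> 4 * (B * sqrt A + 4 * B * A) * real n powr (-1/4)" .
qed

end
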